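(* Let $m\geq 1$ be an integer, $\omega\in[-1,1]$, and $$W_{m,\omega}(x)=m-1-\frac{m}{1-x}+\frac{1-\omega x}{(1-x)^{m+1}(1-2\omega x+x^2)}\qquad(0\le x<1).$$ Then for all real $x,y\geq 0$ with $x+y<1$, $$W_{m,\omega}(x)+W_{m,\omega}(y)\leq W_{m,\omega}(x+y).$$ *)

theory Defs
  imports Complex_Main
begin

definition W :: "nat \<Rightarrow> real \<Rightarrow> real \<Rightarrow> real" where
  "W m \<omega> x = real m - 1 - real m / (1 - x)
     + (1 - \<omega> * x) / ((1 - x) ^ (m + 1) * (1 - 2 * \<omega> * x + x ^ 2))"

end

theory Submission
  imports Defs
begin

(* Call f admissible if f(0) >= 0, f is increasing on [0,1) and f - f(0) is superadditive there.
   Admissible functions are closed under sums and products, and include the nonnegative constants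
   and 1/(1-x). Writing u = 1/(1-x), W is one half of
     (u^(m+1) - 1 - (m+1)(u-1)) + (u^(m-1) - 1 - (m-1)(u-1)) + u^(m-1) (R - 1),
   R(x) = (1+x)/((1-x)(1-2 w x+x^2)); the first two terms are admissible since
   u^(k+1) - 1 - (k+1)(u-1) = (u^k - 1 - k(u-1)) + (u-1)(u^k-1). For w = 1, R = (1+x) u^3.
   For w < 1 put w = Re z with |z| = 1: then (1-w) R(x) = 1/(1-x) - Re (z/(1-zx)), and all first
   and second differences of z/(1-zx) are bounded in modulus by those of 1/(1-x).
   Since W(0) = 0, superadditivity of W follows. *)

definition admissible :: "(real \<Rightarrow> real) \<Rightarrow> bool" where
  "admissible f \<longleftrightarrow>
     (\<forall>x y. 0 \<le> x \<longrightarrow> 0 \<le> y \<longrightarrow> x + y < 1 \<longrightarrow> f x + f y \<le> f (x + y) + f 0)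
     \<and> (\<forall>a b. 0 \<le> a \<longrightarrow> a \<le> b \<longrightarrow> b < 1 \<longrightarrow> f a \<le> f b) \<and> 0 \<le> f 0"

lemma admissibleI:
  assumes "\<And>x y. 0 \<le> x \<Longrightarrow> 0 \<le> y \<Longrightarrow> x + y < 1 \<Longrightarrow> f x + f y \<le> f (x + y) + f 0"
    and "\<And>a b. 0 \<le> a \<Longrightarrow> a \<le> b \<Longrightarrow> b < 1 \<Longrightarrow> f a \<le> f b"
    and "0 \<le> f 0"
  shows "admissible f"
  using assms unfolding admissible_def by blast

lemma admissible_superadd:
  "admissible f \<Longrightarrow> 0 \<le> x \<Longrightarrow> 0 \<le> y \<Longrightarrow> x + y < 1 \<Longrightarrow> f x + f y \<le> f (x + y) + f 0"
  unfolding admissible_def by blast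

lemma admissible_mono: "admissible f \<Longrightarrow> 0 \<le> a \<Longrightarrow> a \<le> b \<Longrightarrow> b < 1 \<Longrightarrow> f a \<le> f b"
  unfolding admissible_def by blast

lemma admissible_nonneg_0: "admissible f \<Longrightarrow> 0 \<le> f 0"
  unfolding admissible_def by blast

lemma admissible_nonneg: "admissible f \<Longrightarrow> 0 \<le> x \<Longrightarrow> x < 1 \<Longrightarrow> 0 \<le> f x"
  using admissible_mono[of f 0 x] admissible_nonneg_0[of f] by linarith

lemma admissible_cong:
  "admissible f \<Longrightarrow> (\<And>x. 0 \<le> x \<Longrightarrow> x < 1 \<Longrightarrow> f x = g x) \<Longrightarrow> admissible g"
  unfolding admissible_def by (smt (verit))

lemma admissible_const: "0 \<le> c \<Longrightarrow> admissible (\<lambda>x. c)"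
  unfolding admissible_def by simp

lemma admissible_add: "admissible f \<Longrightarrow> admissible g \<Longrightarrow> admissible (\<lambda>x. f x + g x)"
  unfolding admissible_def by (smt (verit))

lemma admissible_diff_const: "admissible f \<Longrightarrow> c \<le> f 0 \<Longrightarrow> admissible (\<lambda>x. f x - c)"
  unfolding admissible_def by (smt (verit))

lemma admissible_mult:
  assumes f: "admissible f" and g: "admissible g"
  shows "admissible (\<lambda>x. f x * g x)"
proof (rule admissibleI)
  fix x y :: real
  assume x: "0 \<le> x" and y: "0 \<le> y" and xy: "x + y < 1"
  have f_incr: "f x - f 0 \<le> f (x + y) - f y" and g_incr: "g x - g 0 \<le> g (x + y) - g y"
    using admissible_superadd[OF f x y xy] admissible_superadd[OF g x y xy] by linarith+
  have "0 \<le> f x - f 0" "0 \<le> g x - g 0" "f 0 \<le> f y" "g x \<le> g (x + y)"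
    using x y xy admissible_mono[OF f] admissible_mono[OF g] by auto
  moreover have "0 \<le> g x" "0 \<le> f 0"
    using x y xy admissible_nonneg[OF g] admissible_nonneg_0[OF f] by auto
  ultimately have "(f x - f 0) * g x \<le> (f (x + y) - f y) * g (x + y)"
    and "f 0 * (g x - g 0) \<le> f y * (g (x + y) - g y)"
    using f_incr g_incr by (intro mult_mono; linarith)+
  then show "f x * g x + f y * g y \<le> f (x + y) * g (x + y) + f 0 * g 0"
    by (simp add: algebra_simps)
next
  fix a b :: real
  assume "0 \<le> a" "a \<le> b" "b < 1"
  then show "f a * g a \<le> f b * g b"
    using admissible_mono[OF f] admissible_mono[OF g] admissible_nonneg[OF f] admissible_nonneg[OF g]
    by (intro mult_mono) auto
next
  show "0 \<le> f 0 * g 0"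
    using admissible_nonneg_0[OF f] admissible_nonneg_0[OF g] by simp
qed

lemma admissible_power: "admissible f \<Longrightarrow> admissible (\<lambda>x. f x ^ k)"
  by (induction k) (simp_all add: admissible_const admissible_mult)

lemma admissible_pole: "admissible (\<lambda>x. 1 / (1 - x))"
proof (rule admissibleI)
  fix x y :: real
  assume x: "0 \<le> x" and y: "0 \<le> y" and xy: "x + y < 1"
  have "1 / (1 - (x + y)) + 1 - 1 / (1 - x) - 1 / (1 - y)
      = x * y * (2 - x - y) / ((1 - x) * (1 - y) * (1 - (x + y)))"
    using x y xy by (simp add: divide_simps) (simp add: algebra_simps)
  moreover have "0 \<le> x * y * (2 - x - y) / ((1 - x) * (1 - y) * (1 - (x + y)))"
    using x y xy by (intro divide_nonneg_nonneg mult_nonneg_nonneg) auto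
  ultimately show "1 / (1 - x) + 1 / (1 - y) \<le> 1 / (1 - (x + y)) + 1 / (1 - 0)"
    by simp
next
  fix a b :: real
  assume "0 \<le> a" "a \<le> b" "b < 1"
  then show "1 / (1 - a) \<le> 1 / (1 - b)"
    by (intro divide_left_mono) auto
qed simp

definition tangent_gap :: "nat \<Rightarrow> real \<Rightarrow> real" where
  "tangent_gap k x = (1 / (1 - x)) ^ k - 1 - real k * (1 / (1 - x) - 1)"

lemma admissible_tangent_gap: "admissible (tangent_gap k)"
proof (induction k)
  case 0
  then show ?case
    using admissible_const[of 0] by (simp add: tangent_gap_def)
next
  case (Suc k)
  have "admissible (\<lambda>x. (1 / (1 - x)) ^ j - 1)" for j
    using admissible_diff_const[OF admissible_power[OF admissible_pole, of j], of 1] by simp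
  from this[of 1] this[of k]
  have "admissible (\<lambda>x. tangent_gap k x + ((1 / (1 - x)) ^ 1 - 1) * ((1 / (1 - x)) ^ k - 1))"
    by (intro admissible_add Suc admissible_mult)
  moreover have "tangent_gap k x + ((1 / (1 - x)) ^ 1 - 1) * ((1 / (1 - x)) ^ k - 1) = tangent_gap (Suc k) x"
    for x
    unfolding tangent_gap_def by (simp only: power_Suc power_one_right) (simp add: algebra_simps add_divide_distrib)
  ultimately show ?case
    by simp
qed

lemma resolvent_diff:
  fixes c a b :: "'a :: field"
  assumes "1 - c * a \<noteq> 0" "1 - c * b \<noteq> 0"
  shows "c / (1 - c * b) - c / (1 - c * a) = c\<^sup>2 * (b - a) / ((1 - c * a) * (1 - c * b))"
  using assms by (simp add: divide_simps) (simp add: algebra_simps power2_eq_square)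

lemma resolvent_second_diff:
  fixes c x y s :: "'a :: field"
  assumes "s = x + y" "1 - c * x \<noteq> 0" "1 - c * y \<noteq> 0" "1 - c * s \<noteq> 0"
  shows "c / (1 - c * s) + c - c / (1 - c * x) - c / (1 - c * y)
    = c ^ 3 * (x * y) * (1 / ((1 - c * y) * (1 - c * s)) + 1 / ((1 - c * x) * (1 - c * s)))"
  using assms by (simp add: divide_simps) (simp add: algebra_simps power2_eq_square power3_eq_cube)

lemma norm_one_minus_mult_ge:
  assumes "cmod c \<le> 1" "0 \<le> t"
  shows "1 - t \<le> cmod (1 - c * of_real t)"
proof -
  have "cmod (c * of_real t) \<le> t"
    using assms by (simp add: norm_mult mult_left_le_one_le)
  moreover have "cmod 1 - cmod (c * of_real t) \<le> cmod (1 - c * of_real t)"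
    by (rule norm_triangle_ineq2)
  ultimately show ?thesis
    by simp
qed

lemma norm_inverse_factors_le:
  assumes c: "cmod c \<le> 1" and t: "0 \<le> t" "t < 1" and r: "0 \<le> r" "r < 1"
  shows "cmod (1 / ((1 - c * of_real t) * (1 - c * of_real r))) \<le> 1 / ((1 - t) * (1 - r))"
proof -
  have "(1 - t) * (1 - r) \<le> cmod (1 - c * of_real t) * cmod (1 - c * of_real r)"
    using norm_one_minus_mult_ge[OF c] t r by (intro mult_mono) auto
  moreover have "0 < (1 - t) * (1 - r)"
    using t r by simp
  ultimately show ?thesis
    by (simp add: norm_divide norm_mult divide_simps)
qed

lemma one_minus_mult_nonzero: "cmod c \<le> 1 \<Longrightarrow> 0 \<le> t \<Longrightarrow> t < 1 \<Longrightarrow> 1 - c * of_real t \<noteq> 0"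
  using norm_one_minus_mult_ge[of c t] by auto

lemma norm_resolvent_diff_le:
  assumes c: "cmod c \<le> 1" and a: "0 \<le> a" and ab: "a \<le> b" and b: "b < 1"
  shows "cmod (c / (1 - c * of_real b) - c / (1 - c * of_real a)) \<le> 1 / (1 - b) - 1 / (1 - a)"
proof -
  have "cmod (c / (1 - c * of_real b) - c / (1 - c * of_real a))
      = cmod c ^ 2 * (b - a) / (cmod (1 - c * of_real a) * cmod (1 - c * of_real b))"
    using resolvent_diff[of c "of_real a" "of_real b"] one_minus_mult_nonzero[OF c] a ab b
    by (simp add: norm_mult norm_divide norm_power flip: of_real_diff)
  also have "\<dots> \<le> (b - a) / ((1 - a) * (1 - b))"
    using c a ab b norm_one_minus_mult_ge[OF c]
    by (intro frac_le mult_mono) (auto simp: power_le_one mult_left_le_one_le)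
  also have "\<dots> = 1 / (1 - b) - 1 / (1 - a)"
    using resolvent_diff[of 1 a b] a ab b by simp
  finally show ?thesis .
qed

lemma norm_resolvent_second_diff_le:
  assumes c: "cmod c \<le> 1" and x: "0 \<le> x" and y: "0 \<le> y" and xy: "x + y < 1"
  shows "cmod (c / (1 - c * of_real (x + y)) + c - c / (1 - c * of_real x) - c / (1 - c * of_real y))
    \<le> 1 / (1 - (x + y)) + 1 - 1 / (1 - x) - 1 / (1 - y)"
proof -
  let ?q = "\<lambda>s t. 1 / ((1 - c * of_real s) * (1 - c * of_real t))"
  have "c / (1 - c * of_real (x + y)) + c - c / (1 - c * of_real x) - c / (1 - c * of_real y)
      = c ^ 3 * (of_real x * of_real y) * (?q y (x + y) + ?q x (x + y))"
    using one_minus_mult_nonzero[OF c, of x] one_minus_mult_nonzero[OF c, of y]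
      one_minus_mult_nonzero[OF c, of "x + y"] x y xy
    by (intro resolvent_second_diff) auto
  then have "cmod (c / (1 - c * of_real (x + y)) + c - c / (1 - c * of_real x) - c / (1 - c * of_real y))
      = cmod c ^ 3 * (x * y) * cmod (?q y (x + y) + ?q x (x + y))"
    using x y by (simp add: norm_mult norm_power)
  also have "\<dots> \<le> 1 * (x * y) * (1 / ((1 - y) * (1 - (x + y))) + 1 / ((1 - x) * (1 - (x + y))))"
  proof (intro mult_mono)
    show "cmod (?q y (x + y) + ?q x (x + y)) \<le> 1 / ((1 - y) * (1 - (x + y))) + 1 / ((1 - x) * (1 - (x + y)))"
      using norm_inverse_factors_le[OF c y _ _ xy] norm_inverse_factors_le[OF c x _ _ xy] x y xy
      by (intro order.trans[OF norm_triangle_ineq] add_mono) auto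
  qed (use c x y in \<open>auto simp: power_le_one\<close>)
  also have "\<dots> = 1 / (1 - (x + y)) + 1 - 1 / (1 - x) - 1 / (1 - y)"
    using resolvent_second_diff[of "x + y" x y 1] x y xy by simp
  finally show ?thesis .
qed

lemma admissible_resolvent_gap:
  assumes c: "cmod c \<le> 1"
  shows "admissible (\<lambda>t. 1 / (1 - t) - Re (c / (1 - c * of_real t)))"
proof (rule admissibleI)
  fix x y :: real
  assume "0 \<le> x" "0 \<le> y" "x + y < 1"
  from complex_Re_le_cmod order.trans[OF _ norm_resolvent_second_diff_le[OF c this]]
  show "1 / (1 - x) - Re (c / (1 - c * of_real x)) + (1 / (1 - y) - Re (c / (1 - c * of_real y)))
      \<le> 1 / (1 - (x + y)) - Re (c / (1 - c * of_real (x + y))) + (1 / (1 - 0) - Re (c / (1 - c * of_real 0)))"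
    by force
next
  fix a b :: real
  assume "0 \<le> a" "a \<le> b" "b < 1"
  from complex_Re_le_cmod order.trans[OF _ norm_resolvent_diff_le[OF c this]]
  show "1 / (1 - a) - Re (c / (1 - c * of_real a)) \<le> 1 / (1 - b) - Re (c / (1 - c * of_real b))"
    by force
next
  show "0 \<le> 1 / (1 - 0) - Re (c / (1 - c * of_real 0))"
    using complex_Re_le_cmod[of c] c by simp
qed

definition R :: "real \<Rightarrow> real \<Rightarrow> real" where
  "R \<omega> x = (1 + x) / ((1 - x) * (1 - 2 * \<omega> * x + x ^ 2))"

lemma quadratic_factor_pos:
  fixes \<omega> x :: real
  assumes "\<omega> \<le> 1" "0 \<le> x" "x < 1"
  shows "0 < 1 - 2 * \<omega> * x + x ^ 2"
proof -
  have "1 - 2 * \<omega> * x + x ^ 2 = (1 - x)\<^sup>2 + 2 * (1 - \<omega>) * x"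
    by (simp add: algebra_simps power2_eq_square)
  moreover have "0 < (1 - x)\<^sup>2" "0 \<le> 2 * (1 - \<omega>) * x"
    using assms by simp_all
  ultimately show ?thesis
    by linarith
qed

lemma R_eq_resolvent_gap:
  assumes "\<omega> < 1" "0 \<le> t" "t < 1" "b\<^sup>2 = 1 - \<omega>\<^sup>2"
  shows "R \<omega> t = (1 / (1 - t) - Re (Complex \<omega> b / (1 - Complex \<omega> b * of_real t))) / (1 - \<omega>)"
proof -
  have "Re (Complex \<omega> b / (1 - Complex \<omega> b * of_real t))
      = (\<omega> * (1 - \<omega> * t) - b\<^sup>2 * t) / ((1 - \<omega> * t)\<^sup>2 + b\<^sup>2 * t\<^sup>2)"
    by (simp add: Re_divide power_mult_distrib algebra_simps power2_eq_square)
  also have "\<dots> = (\<omega> - t) / (1 - 2 * \<omega> * t + t ^ 2)"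
    unfolding assms(4) by (simp add: algebra_simps power2_eq_square)
  finally have Re_eq: "Re (Complex \<omega> b / (1 - Complex \<omega> b * of_real t)) = (\<omega> - t) / (1 - 2 * \<omega> * t + t ^ 2)" .
  show ?thesis
    using quadratic_factor_pos[of \<omega> t] assms unfolding Re_eq R_def
    by (simp add: divide_simps) (simp add: algebra_simps power2_eq_square)
qed

lemma admissible_R:
  assumes "-1 \<le> \<omega>" "\<omega> \<le> 1"
  shows "admissible (R \<omega>)"
proof (cases "\<omega> = 1")
  case True
  have "admissible (\<lambda>x. (1 + x) * (1 / (1 - x)) ^ 3)"
    by (intro admissible_mult admissible_power admissible_pole) (auto intro: admissibleI)
  then show ?thesis
    by (rule admissible_cong) (simp add: R_def True power2_eq_square power3_eq_cube field_simps)
next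
  case False
  define z where "z = Complex \<omega> (sqrt (1 - \<omega>\<^sup>2))"
  have sqrt_sq: "(sqrt (1 - \<omega>\<^sup>2))\<^sup>2 = 1 - \<omega>\<^sup>2"
    using assms by (simp add: abs_square_le_1)
  then have "cmod z \<le> 1"
    by (simp add: z_def cmod_def)
  then have "admissible (\<lambda>t. 1 / (1 - \<omega>) * (1 / (1 - t) - Re (z / (1 - z * of_real t))))"
    using False assms by (intro admissible_mult admissible_const admissible_resolvent_gap) auto
  then show ?thesis
    by (rule admissible_cong) (use R_eq_resolvent_gap[OF _ _ _ sqrt_sq] False assms in \<open>simp add: z_def\<close>)
qed

lemma W_Suc_eq:
  assumes "\<omega> \<le> 1" "0 \<le> t" "t < 1"
  shows "W (Suc n) \<omega> t
    = (tangent_gap (n + 2) t + tangent_gap n t + (1 / (1 - t)) ^ n * (R \<omega> t - 1)) / 2"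
proof -
  have "0 < 1 - 2 * \<omega> * t + t ^ 2" "0 < (1 - t) ^ n"
    using quadratic_factor_pos[OF assms] assms by simp_all
  moreover have "(1 - t) ^ (Suc n + 1) = (1 - t) ^ n * ((1 - t) * (1 - t))"
    by (simp add: power_add power2_eq_square)
  ultimately show ?thesis
    using assms unfolding W_def tangent_gap_def R_def
    by (simp add: power_one_over power_add divide_simps) (simp add: algebra_simps power2_eq_square)
qed

lemma admissible_W:
  assumes "1 \<le> m" "-1 \<le> \<omega>" "\<omega> \<le> 1"
  shows "admissible (W m \<omega>)"
proof -
  obtain n where m: "m = Suc n"
    using assms(1) by (cases m) auto
  have "admissible (\<lambda>t. 1 / 2 * (tangent_gap (n + 2) t + tangent_gap n t + (1 / (1 - t)) ^ n * (R \<omega> t - 1)))"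
    using admissible_diff_const[OF admissible_R[OF assms(2,3)], of 1]
    by (intro admissible_mult admissible_const admissible_add admissible_tangent_gap
        admissible_power admissible_pole) (auto simp: R_def)
  then show ?thesis
    by (rule admissible_cong) (simp add: m W_Suc_eq assms(3))
qed

theorem mainTheorem9:
  fixes m :: nat and \<omega> x y :: real
  assumes "m \<ge> 1" and "-1 \<le> \<omega>" and "\<omega> \<le> 1"
    and "x \<ge> 0" and "y \<ge> 0" and "x + y < 1"
  shows "W m \<omega> x + W m \<omega> y \<le> W m \<omega> (x + y)"
proof -
  have "W m \<omega> x + W m \<omega> y \<le> W m \<omega> (x + y) + W m \<omega> 0"
    using admissible_superadd[OF admissible_W[OF assms(1-3)] assms(4-6)] .
  moreover have "W m \<omega> 0 = 0"
    by (simp add: W_def)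
  ultimately show ?thesis
    by simp
qed

end
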